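(* Let $F(x)=\frac{1-x-\sqrt{1-2x-3x^2}}{2x^2}$ be the generating function of the Motzkin numbers $a_n=\sum_{i\ge0}\frac{1}{i+1}\binom{n}{2i}\binom{2i}{i}$. Let $k$ be a positive integer and $m\in\mathbb{N}$. Then $D_{2k,1-2k-m}(N)=0$ for $N=1,\dots,m+2k-1$, and $D_{2k,1-2k-m}(n+m+2k)=(-1)^{\binom{m+2k}{2}}D_{2k,1-2k+m}(n)$ for all $n\in\mathbb{N}$; $D_{2k-1,2-2k-m}(N)=0$ for $N=1,\dots,m+2k-2$, and $D_{2k-1,2-2k-m}(n+m+2k-1)=(-1)^{\binom{m+2k-1}{2}}D_{2k-1,2-2k+m}(n)$ for all $n\in\mathbb{N}$.
   Context: For a power series $F(x)=\sum_{n\ge0}a_nx^n$ and $K\ge1$, write $F(x)^K=\sum_{n\ge0}a_{K,n}x^n$ and set $a_{K,n}=0$ for $n<0$. For $M\in\mathbb{Z}$ and $K,N\in\mathbb{N}$ with $K\ge1$, define the shifted Hankel determinant $D_{K,M}(N)=\det(a_{K,i+j+M})_{i,j=0}^{N-1}$, with $D_{K,M}(0)=1$. $\mathbb{N}=\{0,1,2,\dots\}$. *)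

theory Defs
  imports "HOL-Computational_Algebra.Formal_Power_Series" "Jordan_Normal_Form.Determinant"
begin

definition motzkin :: "nat \<Rightarrow> rat" where
  "motzkin n = (\<Sum>i\<le>n. of_nat (n choose (2*i)) * of_nat ((2*i) choose i) / of_nat (i+1))"

definition motzkin_fps :: "rat fps" where
  "motzkin_fps = Abs_fps motzkin"

definition aK :: "nat \<Rightarrow> int \<Rightarrow> rat" where
  "aK K n = (if n < 0 then 0 else fps_nth (motzkin_fps ^ K) (nat n))"

text \<open>Shifted Hankel determinant D_{K,M}(N) = det(a_{K,i+j+M})_{i,j=0}^{N-1}; det of 0x0 matrix is 1.\<close>
definition hankelD :: "nat \<Rightarrow> int \<Rightarrow> nat \<Rightarrow> rat" where
  "hankelD K M N = det (mat N N (\<lambda>(i,j). aK K (int i + int j + M)))"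

end

(*
  Let G be a power series with G(0) = 1 and let M be the Hankel matrix of size n + s + 1 of the
  coefficients of x^s G. Multiplying M on the left by the lower triangular Toeplitz matrix of 1/G
  (determinant 1), the relation G * (1/G) = 1 turns the first s + 1 columns into reversed unit
  vectors and the remaining columns into sums over tails of 1/G. The result is block triangular:
  an exchange matrix of size s + 1, of determinant (-1)^binom(s+1,2), and a block which factors as
  the Hankel matrix of -(1/G)_{i+j+s+2} times a unitriangular Toeplitz matrix of G.

  For G = F^K with F the Motzkin series, F = 1 + x F + x^2 F^2 (obtained from the Catalan equation
  C = 1 + x C^2 via F(x) = C(x^2/(1-x)^2)/(1-x)) shows that 1/F and x^2 F have sum 1 - x and
  product x^2. Hence (1/F)^K + (x^2 F)^K is a polynomial of degree at most K, so beyond degree K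
  the coefficients of 1/F^K are those of -x^(2K) F^K. This identifies the second Hankel
  determinant with D_{K, s+2-2K}(n), and the theorem is the cases K = 2k and K = 2k - 1.
*)
theory Submission
  imports Defs
begin

no_notation vec_index (infixl "$" 100)
notation fps_nth (infixl "$" 75)

section \<open>Coefficients of power series\<close>

definition fps_nth_int :: "'a::zero fps \<Rightarrow> int \<Rightarrow> 'a" where
  "fps_nth_int f t = (if t < 0 then 0 else f $ nat t)"

lemma fps_nth_int_diff: "fps_nth_int f (int l - int s) = (if l < s then 0 else f $ (l - s))"
  by (auto simp: fps_nth_int_def nat_diff_distrib)

lemma fps_mult_nth_eq_0_above:
  fixes f g :: "'a::semiring_0 fps"
  assumes "\<And>i. d < i \<Longrightarrow> f $ i = 0" and "\<And>j. e < j \<Longrightarrow> g $ j = 0" and "d + e < n"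
  shows "(f * g) $ n = 0"
  unfolding fps_mult_nth
proof (intro sum.neutral ballI)
  fix i
  show "f $ i * g $ (n - i) = 0"
  proof (cases "d < i")
    case True
    then show ?thesis using assms(1) by simp
  next
    case False
    then have "e < n - i" using assms(3) by linarith
    then show ?thesis using assms(2) by simp
  qed
qed

lemma power_sum_nth_eq_0_above:
  fixes a b :: "'a::comm_ring_1 fps"
  assumes sum: "\<And>n. 1 < n \<Longrightarrow> (a + b) $ n = 0" and prod: "\<And>n. 2 < n \<Longrightarrow> (a * b) $ n = 0"
  shows "K < n \<Longrightarrow> (a ^ K + b ^ K) $ n = 0"
proof (induction K arbitrary: n rule: induct_nat_012)
  case 0
  then show ?case by (simp add: fps_numeral_nth)
next
  case 1
  then show ?case using sum[of n] by simp
next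
  case (ge2 K)
  have "a ^ Suc (Suc K) + b ^ Suc (Suc K) = (a + b) * (a ^ Suc K + b ^ Suc K) - (a * b) * (a ^ K + b ^ K)"
    by (simp add: algebra_simps)
  moreover have "((a + b) * (a ^ Suc K + b ^ Suc K)) $ n = 0"
    using ge2 by (intro fps_mult_nth_eq_0_above[of 1 _ "Suc K"] sum) simp_all
  moreover have "((a * b) * (a ^ K + b ^ K)) $ n = 0"
    using ge2 by (intro fps_mult_nth_eq_0_above[of 2 _ K] prod) simp_all
  ultimately show ?case
    by simp
qed

lemma inverse_mult_shifted_sum_below:
  fixes G :: "'a::field fps"
  assumes "G $ 0 \<noteq> 0"
  shows "(\<Sum>l=0..a. inverse G $ (a - l) * fps_nth_int G (int l - int d)) = (if a = d then 1 else 0)"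
proof -
  have "(\<Sum>l=0..a. inverse G $ (a - l) * fps_nth_int G (int l - int d))
      = (\<Sum>l=0..a. (fps_X ^ d * G) $ l * inverse G $ (a - l))"
    by (intro sum.cong) (simp_all add: fps_nth_int_diff fps_X_power_mult_nth)
  also have "\<dots> = (fps_X ^ d * G * inverse G) $ a"
    by (simp only: fps_mult_nth)
  also have "fps_X ^ d * G * inverse G = fps_X ^ d"
    using inverse_mult_eq_1'[OF assms] by (simp add: mult.assoc)
  finally show ?thesis by simp
qed

lemma inverse_mult_shifted_sum_above:
  fixes G :: "'a::field fps"
  assumes "G $ 0 \<noteq> 0" and "0 < e"
  shows "(\<Sum>l=0..a. inverse G $ (a - l) * G $ (l + e)) = - (\<Sum>u<e. G $ u * inverse G $ (a + e - u))"
proof -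
  have "0 = (G * inverse G) $ (a + e)"
    using inverse_mult_eq_1'[OF assms(1)] assms(2) by simp
  also have "\<dots> = (\<Sum>w=0..<e. G $ w * inverse G $ (a + e - w))
                  + (\<Sum>w=e..<Suc (a + e). G $ w * inverse G $ (a + e - w))"
    unfolding fps_mult_nth atLeastLessThanSuc_atLeastAtMost[symmetric]
    by (rule sum.atLeastLessThan_concat[symmetric]) auto
  also have "(\<Sum>w=e..<Suc (a + e). G $ w * inverse G $ (a + e - w))
           = (\<Sum>l=0..a. inverse G $ (a - l) * G $ (l + e))"
    using sum.shift_bounds_nat_ivl[of "\<lambda>w. G $ w * inverse G $ (a + e - w)" 0 e "Suc a"]
    by (simp add: atLeastLessThanSuc_atLeastAtMost add.commute mult.commute)
  finally show ?thesis
    by (simp add: lessThan_atLeast0 eq_neg_iff_add_eq_0 add.commute)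
qed

lemma inverse_one_minus_X_power_nth:
  "(inverse (1 - fps_X) ^ Suc k :: 'a::field_char_0 fps) $ n = of_nat ((n + k) choose k)"
proof -
  have "inverse (1 - fps_X) ^ Suc k = (inverse ((1 - fps_const 1 * fps_X) ^ Suc k) :: 'a fps)"
    by (simp only: fps_inverse_power fps_const_1_eq_1 mult_1_left)
  also have "\<dots> $ n = of_nat ((n + k) choose n)"
    by (subst one_minus_const_fps_X_neg_power') (simp_all add: add.commute)
  finally show ?thesis
    using binomial_symmetric[of k "n + k"] by simp
qed

section \<open>Hankel determinants of a series with constant term one\<close>

definition hankel_mat :: "nat \<Rightarrow> (nat \<Rightarrow> 'a) \<Rightarrow> 'a mat" where
  "hankel_mat n f = mat n n (\<lambda>(i,j). f (i + j))"

definition lower_toeplitz_mat :: "nat \<Rightarrow> (nat \<Rightarrow> 'a::zero) \<Rightarrow> 'a mat" where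
  "lower_toeplitz_mat n f = mat n n (\<lambda>(i,j). if j \<le> i then f (i - j) else 0)"

definition upper_toeplitz_mat :: "nat \<Rightarrow> (nat \<Rightarrow> 'a::zero) \<Rightarrow> 'a mat" where
  "upper_toeplitz_mat n f = mat n n (\<lambda>(i,j). if i \<le> j then f (j - i) else 0)"

definition exchange_mat :: "nat \<Rightarrow> 'a::{zero,one} mat" where
  "exchange_mat n = mat n n (\<lambda>(i,j). if i + j + 1 = n then 1 else 0)"

lemma hankel_mat_carrier [simp]: "hankel_mat n f \<in> carrier_mat n n"
  by (simp add: hankel_mat_def)

lemma lower_toeplitz_mat_carrier [simp]: "lower_toeplitz_mat n f \<in> carrier_mat n n"
  by (simp add: lower_toeplitz_mat_def)

lemma upper_toeplitz_mat_carrier [simp]: "upper_toeplitz_mat n f \<in> carrier_mat n n"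
  by (simp add: upper_toeplitz_mat_def)

lemma exchange_mat_carrier [simp]: "exchange_mat n \<in> carrier_mat n n"
  by (simp add: exchange_mat_def)

lemma prod_list_map_one: "prod_list (map (\<lambda>_. 1) xs) = (1::'a::monoid_mult)"
  by (induction xs) auto

lemma det_lower_toeplitz_mat:
  fixes f :: "nat \<Rightarrow> 'a::comm_ring_1"
  assumes "f 0 = 1"
  shows "det (lower_toeplitz_mat n f) = 1"
proof -
  have "det (lower_toeplitz_mat n f) = prod_list (diag_mat (lower_toeplitz_mat n f))"
    by (rule det_lower_triangular[OF _ lower_toeplitz_mat_carrier]) (auto simp: lower_toeplitz_mat_def)
  also have "diag_mat (lower_toeplitz_mat n f) = map (\<lambda>_. 1) [0..<n]"
    unfolding diag_mat_def by (rule map_cong) (auto simp: lower_toeplitz_mat_def assms)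
  finally show ?thesis by (simp only: prod_list_map_one)
qed

lemma det_upper_toeplitz_mat:
  fixes f :: "nat \<Rightarrow> 'a::comm_ring_1"
  assumes "f 0 = 1"
  shows "det (upper_toeplitz_mat n f) = 1"
proof -
  have "det (upper_toeplitz_mat n f) = prod_list (diag_mat (upper_toeplitz_mat n f))"
    by (rule det_upper_triangular[OF _ upper_toeplitz_mat_carrier]) (auto simp: upper_triangular_def upper_toeplitz_mat_def)
  also have "diag_mat (upper_toeplitz_mat n f) = map (\<lambda>_. 1) [0..<n]"
    unfolding diag_mat_def by (rule map_cong) (auto simp: upper_toeplitz_mat_def assms)
  finally show ?thesis by (simp only: prod_list_map_one)
qed

lemma det_exchange_mat: "det (exchange_mat n :: 'a::comm_ring_1 mat) = (-1) ^ (n choose 2)"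
proof (induction n)
  case 0
  then show ?case by (simp add: exchange_mat_def binomial_eq_0)
next
  case (Suc n)
  let ?J = "exchange_mat (Suc n) :: 'a mat"
  have minor: "mat_delete ?J 0 n = exchange_mat n"
    by (rule eq_matI) (auto simp: exchange_mat_def mat_delete_def)
  have "det ?J = (\<Sum>j<Suc n. ?J $$ (0,j) * cofactor ?J 0 j)"
    by (rule laplace_expansion_row) simp_all
  also have "\<dots> = (\<Sum>j<n. ?J $$ (0,j) * cofactor ?J 0 j) + cofactor ?J 0 n"
    by (simp add: exchange_mat_def)
  also have "(\<Sum>j<n. ?J $$ (0,j) * cofactor ?J 0 j) = 0"
    by (rule sum.neutral) (simp add: exchange_mat_def)
  also have "cofactor ?J 0 n = (-1) ^ n * (-1) ^ (n choose 2)"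
    by (simp add: cofactor_def minor Suc)
  also have "\<dots> = (-1) ^ (Suc n choose 2)"
    by (simp add: power_add[symmetric] numeral_2_eq_2)
  finally show ?case by simp
qed

lemma det_hankel_mat_eq_0:
  fixes f :: "nat \<Rightarrow> 'a::comm_ring_1"
  assumes "0 < n" and "\<And>j. j < n \<Longrightarrow> f j = 0"
  shows "det (hankel_mat n f) = 0"
proof -
  have "det (hankel_mat n f) = (\<Sum>j<n. hankel_mat n f $$ (0,j) * cofactor (hankel_mat n f) 0 j)"
    by (rule laplace_expansion_row) (simp_all add: assms)
  also have "\<dots> = 0"
    by (rule sum.neutral) (simp add: hankel_mat_def assms)
  finally show ?thesis .
qed

lemma lower_toeplitz_mult_nth:
  assumes "A \<in> carrier_mat n m" "a < n" "j < m"
  shows "(lower_toeplitz_mat n f * A) $$ (a,j) = (\<Sum>l=0..a. f (a - l) * A $$ (l,j))"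
proof -
  have "(lower_toeplitz_mat n f * A) $$ (a,j) = (\<Sum>l<n. (if l \<le> a then f (a - l) else 0) * A $$ (l,j))"
    using assms by (auto simp: scalar_prod_def lessThan_atLeast0 lower_toeplitz_mat_def intro!: sum.cong)
  also have "\<dots> = (\<Sum>l=0..a. f (a - l) * A $$ (l,j))"
    using assms by (intro sum.mono_neutral_cong_right) auto
  finally show ?thesis .
qed

lemma hankel_mult_upper_toeplitz:
  fixes f g :: "nat \<Rightarrow> 'a::comm_semiring_0"
  shows "hankel_mat n f * upper_toeplitz_mat n g = mat n n (\<lambda>(i,j). \<Sum>u\<le>j. g u * f (i + j - u))"
    (is "?HU = ?R")
proof (rule eq_matI)
  fix i j assume "i < dim_row ?R" "j < dim_col ?R"
  then have ij: "i < n" "j < n" by auto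
  have "?HU $$ (i,j) = (\<Sum>t<n. f (i + t) * (if t \<le> j then g (j - t) else 0))"
    using ij by (auto simp: scalar_prod_def lessThan_atLeast0 hankel_mat_def upper_toeplitz_mat_def intro!: sum.cong)
  also have "\<dots> = (\<Sum>t\<le>j. f (i + t) * g (j - t))"
    using ij by (intro sum.mono_neutral_cong_right) auto
  also have "\<dots> = (\<Sum>u\<le>j. g u * f (i + j - u))"
    by (rule sum.reindex_bij_witness[of _ "\<lambda>u. j - u" "\<lambda>t. j - t"]) (auto simp: mult.commute)
  finally show "?HU $$ (i,j) = ?R $$ (i,j)"
    using ij by simp
qed (simp_all add: hankel_mat_def upper_toeplitz_mat_def)

lemma lower_toeplitz_inverse_mult_shifted_hankel:
  fixes G :: "'a::field fps"
  assumes "G $ 0 \<noteq> 0" and "a < N" and "j < N"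
  shows "(lower_toeplitz_mat N (($) (inverse G)) * hankel_mat N (\<lambda>t. fps_nth_int G (int t - int s))) $$ (a, j)
       = (if j \<le> s then (if a + j = s then 1 else 0)
          else - (\<Sum>u<j - s. G $ u * inverse G $ (a + (j - s) - u)))"
proof -
  have "(lower_toeplitz_mat N (($) (inverse G)) * hankel_mat N (\<lambda>t. fps_nth_int G (int t - int s))) $$ (a, j)
      = (\<Sum>l=0..a. inverse G $ (a - l) * fps_nth_int G (int (l + j) - int s))"
    using assms by (subst lower_toeplitz_mult_nth[OF hankel_mat_carrier]) (simp_all add: hankel_mat_def)
  also have "\<dots> = (if j \<le> s then (if a + j = s then 1 else 0)
          else - (\<Sum>u<j - s. G $ u * inverse G $ (a + (j - s) - u)))"
  proof (cases "j \<le> s")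
    case True
    have "int (l + j) - int s = int l - int (s - j)" for l
      using True by simp
    then have "(\<Sum>l=0..a. inverse G $ (a - l) * fps_nth_int G (int (l + j) - int s))
        = (\<Sum>l=0..a. inverse G $ (a - l) * fps_nth_int G (int l - int (s - j)))"
      by (simp only:)
    then show ?thesis
      using True inverse_mult_shifted_sum_below[OF assms(1), of a "s - j"] by auto
  next
    case False
    have "fps_nth_int G (int (l + j) - int s) = G $ (l + (j - s))" for l
      using False fps_nth_int_diff[of G "l + j" s] by simp
    then show ?thesis
      using False inverse_mult_shifted_sum_above[OF assms(1), of "j - s" a] by simp
  qed
  finally show ?thesis .
qed

lemma det_shifted_hankel_mat:
  fixes G :: "'a::field fps"
  assumes G0: "G $ 0 = 1"
  shows "det (hankel_mat (n + s + 1) (\<lambda>t. fps_nth_int G (int t - int s)))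
       = (-1) ^ ((s + 1) choose 2) * det (hankel_mat n (\<lambda>t. - inverse G $ (t + s + 2)))"
proof -
  define N where "N = n + s + 1"
  define L where "L = lower_toeplitz_mat N (($) (inverse G))"
  define M where "M = hankel_mat N (\<lambda>t. fps_nth_int G (int t - int s))"
  define B where "B = mat (s + 1) n (\<lambda>(i,j). (L * M) $$ (i, j + s + 1))"
  define E where "E = mat n n (\<lambda>(i,j). (L * M) $$ (i + s + 1, j + s + 1))"
  define H where "H = hankel_mat n (\<lambda>t. - inverse G $ (t + s + 2))"
  define U where "U = upper_toeplitz_mat n (($) G)"
  have Lc: "L \<in> carrier_mat N N" and Mc: "M \<in> carrier_mat N N"
    and Hc: "H \<in> carrier_mat n n" and Uc: "U \<in> carrier_mat n n"
    by (simp_all add: L_def M_def H_def U_def)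
  have LM_entry: "(L * M) $$ (i, j) = (if j \<le> s then (if i + j = s then 1 else 0)
          else - (\<Sum>u<j - s. G $ u * inverse G $ (i + (j - s) - u)))" if "i < N" "j < N" for i j
    unfolding L_def M_def using lower_toeplitz_inverse_mult_shifted_hankel[of G i N j s] that G0 by simp
  have LM_blocks: "L * M = four_block_mat (exchange_mat (s + 1)) B (0\<^sub>m n (s + 1)) E"
    by (rule eq_matI) (use mult_carrier_mat[OF Lc Mc] in \<open>auto simp: LM_entry exchange_mat_def B_def E_def N_def\<close>)
  have "E = H * U"
  proof (rule eq_matI)
    fix i j assume "i < dim_row (H * U)" "j < dim_col (H * U)"
    then have ij: "i < n" "j < n" using Hc Uc by auto
    have "i + s + 1 + Suc j - u = i + j - u + s + 2" if "u \<le> j" for u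
      using that by simp
    then have "(\<Sum>u<Suc j. G $ u * inverse G $ (i + s + 1 + Suc j - u))
        = (\<Sum>u\<le>j. G $ u * inverse G $ (i + j - u + s + 2))"
      unfolding lessThan_Suc_atMost by (intro sum.cong) simp_all
    then show "E $$ (i, j) = (H * U) $$ (i, j)"
      using ij by (simp add: E_def LM_entry N_def H_def U_def hankel_mult_upper_toeplitz sum_negf)
  qed (use Hc Uc in \<open>simp_all add: E_def\<close>)
  have "det M = det (L * M)"
    using det_mult[OF Lc Mc] det_lower_toeplitz_mat[of "($) (inverse G)"] G0 by (simp add: L_def)
  also have "\<dots> = det (exchange_mat (s + 1)) * det (H * U)"
    unfolding LM_blocks \<open>E = H * U\<close>
    by (rule det_four_block_mat_lower_left_zero) (use mult_carrier_mat[OF Hc Uc] in \<open>simp_all add: B_def\<close>)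
  also have "\<dots> = (-1) ^ ((s + 1) choose 2) * det H"
    using det_mult[OF Hc Uc] det_upper_toeplitz_mat[of "($) G" n] G0 by (simp add: det_exchange_mat U_def)
  finally show ?thesis
    by (simp add: M_def N_def H_def)
qed

section \<open>The Catalan and Motzkin series\<close>

definition catalan :: "nat \<Rightarrow> rat" where
  "catalan n = of_nat ((2 * n) choose n) / of_nat (n + 1)"

definition catalan_fps :: "rat fps" where
  "catalan_fps = Abs_fps catalan"

lemma Suc_times_central_binomial:
  "Suc n * (2 * Suc n choose Suc n) = 2 * (2 * n + 1) * (2 * n choose n)"
  by (metis Suc_eq_plus1 Suc_times_binomial Suc_times_binomial_add add_2_eq_Suc add_mult_distrib
      mult_Suc_right nat_mult_1 one_add_one)

lemma catalan_Suc: "catalan (Suc n) = 2 * (2 * of_nat n + 1) / (of_nat n + 2) * catalan n"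
proof -
  define A where "A = 2 * Suc n choose Suc n"
  define B where "B = 2 * n choose n"
  have "Suc n * A = 2 * (2 * n + 1) * B"
    unfolding A_def B_def by (rule Suc_times_central_binomial)
  then have "(of_nat (Suc n * A) :: rat) = of_nat (2 * (2 * n + 1) * B)"
    by (simp only:)
  then have "of_nat (Suc n) * (of_nat A :: rat) = 2 * (2 * of_nat n + 1) * of_nat B"
    by (simp only: of_nat_mult of_nat_add of_nat_numeral of_nat_1)
  then have "(of_nat A :: rat) = 2 * (2 * of_nat n + 1) * of_nat B / (of_nat n + 1)"
    by (simp add: field_simps)
  then show ?thesis
    unfolding catalan_def A_def[symmetric] B_def[symmetric] by simp (simp add: algebra_simps)
qed

lemma gbinomial_Suc_recurrence:
  fixes a :: "'a::field_char_0"
  shows "a gchoose Suc k = (a - of_nat k) / of_nat (Suc k) * (a gchoose k)"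
proof -
  have "of_nat (Suc k) * (a gchoose Suc k) = (a - of_nat k) * (a gchoose k)"
    by (simp only: gbinomial_absorption gbinomial_absorb_comp)
  then show ?thesis
    by (simp add: field_simps del: of_nat_Suc)
qed

lemma gbinomial_half_Suc: "((1/2 :: rat) gchoose Suc n) * (-4) ^ Suc n = -2 * catalan n"
proof (induction n)
  case 0
  then show ?case by (simp add: catalan_def)
next
  case (Suc n)
  have "((1/2 :: rat) gchoose Suc (Suc n)) * (-4) ^ Suc (Suc n)
      = -4 * (1/2 - of_nat (Suc n)) / of_nat (Suc (Suc n)) * (((1/2 :: rat) gchoose Suc n) * (-4) ^ Suc n)"
    by (simp only: gbinomial_Suc_recurrence[of _ "Suc n"] power_Suc mult_ac times_divide_eq_left)
  also have "\<dots> = -2 * catalan (Suc n)"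
    unfolding Suc catalan_Suc by (simp add: field_simps)
  finally show ?case .
qed

definition sqrt_1_minus_4X :: "rat fps" where
  "sqrt_1_minus_4X = fps_binomial (1/2) oo (fps_const (-4) * fps_X)"

lemma sqrt_1_minus_4X_squared: "sqrt_1_minus_4X ^ 2 = 1 - 4 * fps_X"
proof -
  have "sqrt_1_minus_4X ^ 2 = fps_binomial (1/2) ^ 2 oo (fps_const (-4) * fps_X)"
    unfolding sqrt_1_minus_4X_def by (simp add: fps_compose_power)
  also have "fps_binomial (1/2 :: rat) ^ 2 = 1 + fps_X"
    by (simp add: fps_binomial_power fps_binomial_1)
  also have "fps_const (-4 :: rat) = - 4"
    by (simp add: numeral_fps_const)
  finally show ?thesis
    by (simp add: fps_compose_add_distrib)
qed

lemma sqrt_1_minus_4X_eq: "sqrt_1_minus_4X = 1 - 2 * fps_X * catalan_fps"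
proof (rule fps_ext)
  fix n
  have "(2 * fps_X * catalan_fps) $ n = (if n = 0 then 0 else 2 * catalan (n - 1))"
    by (simp add: mult.assoc numeral_fps_const fps_X_mult_nth catalan_fps_def)
  then show "sqrt_1_minus_4X $ n = (1 - 2 * fps_X * catalan_fps) $ n"
    using gbinomial_half_Suc[of "n - 1"]
    unfolding sqrt_1_minus_4X_def fps_compose_linear
    by (cases n) (simp_all add: mult.commute)
qed

lemma catalan_fps_equation: "catalan_fps = 1 + fps_X * catalan_fps ^ 2"
proof -
  have "4 * fps_X * (catalan_fps - 1 - fps_X * catalan_fps ^ 2)
      = (1 - 4 * fps_X) - (1 - 2 * fps_X * catalan_fps) ^ 2"
    by (simp add: algebra_simps power2_eq_square)
  also have "\<dots> = 0"
    unfolding sqrt_1_minus_4X_eq[symmetric] sqrt_1_minus_4X_squared by simp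
  finally have "catalan_fps - 1 = fps_X * catalan_fps ^ 2"
    by simp
  then show ?thesis
    by (simp add: diff_eq_eq add.commute)
qed

lemma motzkin_eq_sum_catalan: "motzkin n = (\<Sum>i\<le>n. of_nat (n choose (2 * i)) * catalan i)"
  unfolding motzkin_def catalan_def by simp

lemma motzkin_fps_catalan:
  "motzkin_fps = (catalan_fps oo (fps_X * inverse (1 - fps_X)) ^ 2) * inverse (1 - fps_X)"
proof (rule fps_ext)
  fix n
  define D where "D = inverse (1 - fps_X :: rat fps)"
  define Z where "Z = (fps_X * D) ^ 2"
  define P where "P = (\<Sum>i\<le>n. fps_const (catalan i) * Z ^ i)"
  have Z_power: "Z ^ i = fps_X ^ (2 * i) * D ^ (2 * i)" for i
    by (simp add: Z_def power_mult_distrib power_mult)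
  have compose_eq_P: "(catalan_fps oo Z) $ m = P $ m" if "m \<le> n" for m
  proof -
    have "(catalan_fps oo Z) $ m = (\<Sum>i=0..m. catalan i * (Z ^ i) $ m)"
      by (simp add: fps_compose_nth catalan_fps_def)
    also have "\<dots> = (\<Sum>i\<le>n. catalan i * (Z ^ i) $ m)"
      using that by (intro sum.mono_neutral_left) (auto simp: Z_power fps_X_power_mult_nth)
    finally show ?thesis
      by (simp add: P_def fps_sum_nth)
  qed
  have "((catalan_fps oo Z) * D) $ n = (P * D) $ n"
    unfolding fps_mult_nth by (intro sum.cong) (simp_all add: compose_eq_P)
  also have "P * D = (\<Sum>i\<le>n. fps_const (catalan i) * (fps_X ^ (2 * i) * D ^ Suc (2 * i)))"
    unfolding P_def sum_distrib_right Z_power by (simp only: mult.assoc power_Suc2)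
  also have "\<dots> $ n = (\<Sum>i\<le>n. catalan i * of_nat (n choose (2 * i)))"
    by (auto simp: fps_sum_nth fps_X_power_mult_nth D_def inverse_one_minus_X_power_nth binomial_eq_0
        simp del: power_Suc intro!: sum.cong)
  finally show "motzkin_fps $ n = ((catalan_fps oo (fps_X * inverse (1 - fps_X)) ^ 2) * inverse (1 - fps_X)) $ n"
    by (simp add: motzkin_fps_def motzkin_eq_sum_catalan mult.commute Z_def D_def)
qed

lemma motzkin_fps_equation: "motzkin_fps = 1 + fps_X * motzkin_fps + fps_X ^ 2 * motzkin_fps ^ 2"
proof -
  define D where "D = inverse (1 - fps_X :: rat fps)"
  define G where "G = catalan_fps oo (fps_X * D) ^ 2"
  have F: "motzkin_fps = G * D"
    unfolding G_def D_def by (rule motzkin_fps_catalan)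
  have "G = (1 + fps_X * catalan_fps ^ 2) oo (fps_X * D) ^ 2"
    unfolding G_def by (subst catalan_fps_equation) (rule refl)
  also have "\<dots> = 1 + (fps_X * D) ^ 2 * G ^ 2"
    by (simp add: G_def fps_compose_add_distrib fps_compose_mult_distrib fps_compose_power)
  finally have G: "G = 1 + fps_X ^ 2 * motzkin_fps ^ 2"
    by (simp add: F power_mult_distrib mult_ac)
  have "(1 - fps_X) * motzkin_fps = G"
    using inverse_mult_eq_1'[of "1 - fps_X :: rat fps"] by (simp add: F D_def mult.assoc[symmetric])
  then show ?thesis
    unfolding G by (simp add: algebra_simps)
qed

lemma motzkin_fps_nth_0: "motzkin_fps $ 0 = 1"
  by (simp add: motzkin_fps_def motzkin_def)

section \<open>Shifted Hankel determinants of powers of the Motzkin series\<close>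

lemma inverse_motzkin_power_nth:
  assumes "K < n"
  shows "inverse (motzkin_fps ^ K) $ n = - (fps_X ^ (2 * K) * motzkin_fps ^ K) $ n"
proof -
  define \<alpha> where "\<alpha> = inverse motzkin_fps"
  define \<beta> where "\<beta> = fps_X ^ 2 * motzkin_fps"
  have \<alpha>F: "\<alpha> * motzkin_fps = 1"
    unfolding \<alpha>_def by (rule inverse_mult_eq_1) (simp add: motzkin_fps_nth_0)
  have "\<alpha> * motzkin_fps = \<alpha> + fps_X * (\<alpha> * motzkin_fps) + \<beta> * (\<alpha> * motzkin_fps)"
    by (subst (1) motzkin_fps_equation) (simp add: \<beta>_def algebra_simps power2_eq_square)
  then have "\<alpha> + fps_X + \<beta> = 1"
    unfolding \<alpha>F by simp
  then have sum: "\<alpha> + \<beta> = 1 - fps_X"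
    by (simp add: algebra_simps flip: \<open>\<alpha> + fps_X + \<beta> = 1\<close>)
  have prod: "\<alpha> * \<beta> = fps_X ^ 2"
    using \<alpha>F by (simp add: \<beta>_def mult_ac)
  have "(\<alpha> ^ K + \<beta> ^ K) $ n = 0"
    by (rule power_sum_nth_eq_0_above) (simp_all add: sum prod assms)
  moreover have "inverse (motzkin_fps ^ K) = \<alpha> ^ K"
    by (simp add: \<alpha>_def fps_inverse_power)
  moreover have "\<beta> ^ K = fps_X ^ (2 * K) * motzkin_fps ^ K"
    by (simp add: \<beta>_def power_mult_distrib power_mult)
  ultimately show ?thesis
    by (simp add: eq_neg_iff_add_eq_0)
qed

lemma hankelD_eq_det_hankel_mat:
  "hankelD K M N = det (hankel_mat N (\<lambda>t. fps_nth_int (motzkin_fps ^ K) (int t + M)))"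
  unfolding hankelD_def hankel_mat_def aK_def fps_nth_int_def
  by (intro arg_cong[where f = det] eq_matI) auto

lemma hankelD_negative_shift_eq_0:
  assumes "1 \<le> N" and "N \<le> s"
  shows "hankelD K (- int s) N = 0"
  unfolding hankelD_eq_det_hankel_mat using assms
  by (intro det_hankel_mat_eq_0) (auto simp: fps_nth_int_def)

lemma hankelD_negative_shift:
  assumes "K \<le> s + 1"
  shows "hankelD K (- int s) (n + s + 1) = (-1) ^ ((s + 1) choose 2) * hankelD K (int s + 2 - 2 * int K) n"
proof -
  have "- inverse (motzkin_fps ^ K) $ (t + s + 2) = fps_nth_int (motzkin_fps ^ K) (int t + (int s + 2 - 2 * int K))"
    for t
  proof -
    have "- inverse (motzkin_fps ^ K) $ (t + s + 2) = (fps_X ^ (2 * K) * motzkin_fps ^ K) $ (t + s + 2)"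
      using assms inverse_motzkin_power_nth[of K "t + s + 2"] by simp
    also have "\<dots> = fps_nth_int (motzkin_fps ^ K) (int (t + s + 2) - int (2 * K))"
      by (simp only: fps_X_power_mult_nth fps_nth_int_diff)
    also have "int (t + s + 2) - int (2 * K) = int t + (int s + 2 - 2 * int K)"
      by simp
    finally show ?thesis .
  qed
  note coeff_eq = this
  have "hankelD K (- int s) (n + s + 1)
      = det (hankel_mat (n + s + 1) (\<lambda>t. fps_nth_int (motzkin_fps ^ K) (int t - int s)))"
    by (simp add: hankelD_eq_det_hankel_mat)
  also have "\<dots> = (-1) ^ ((s + 1) choose 2) * det (hankel_mat n (\<lambda>t. - inverse (motzkin_fps ^ K) $ (t + s + 2)))"
    by (rule det_shifted_hankel_mat) (simp add: fps_nth_power_0 motzkin_fps_nth_0)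
  also have "\<dots> = (-1) ^ ((s + 1) choose 2) * hankelD K (int s + 2 - 2 * int K) n"
    unfolding coeff_eq hankelD_eq_det_hankel_mat ..
  finally show ?thesis .
qed

theorem corollary3p2:
  fixes k m :: nat
  assumes "k \<ge> 1"
  shows "(\<forall>N. 1 \<le> N \<and> N \<le> m + 2*k - 1 \<longrightarrow> hankelD (2*k) (1 - 2*int k - int m) N = 0)
       \<and> (\<forall>n. hankelD (2*k) (1 - 2*int k - int m) (n + m + 2*k)
              = (-1) ^ ((m + 2*k) choose 2) * hankelD (2*k) (1 - 2*int k + int m) n)
       \<and> (\<forall>N. 1 \<le> N \<and> N \<le> m + 2*k - 2 \<longrightarrow> hankelD (2*k - 1) (2 - 2*int k - int m) N = 0)
       \<and> (\<forall>n. hankelD (2*k - 1) (2 - 2*int k - int m) (n + m + 2*k - 1)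
              = (-1) ^ ((m + 2*k - 1) choose 2) * hankelD (2*k - 1) (2 - 2*int k + int m) n)"
proof -
  have "2*k \<le> (m + 2*k - 1) + 1" and "2*k - 1 \<le> (m + 2*k - 2) + 1"
    by simp_all
  note reflection = this[THEN hankelD_negative_shift]
  have index_eqs: "- int (m + 2*k - 1) = 1 - 2*int k - int m"
    "int (m + 2*k - 1) + 2 - 2 * int (2*k) = 1 - 2*int k + int m"
    "\<And>n. n + (m + 2*k - 1) + 1 = n + m + 2*k"
    "m + 2*k - 1 + 1 = m + 2*k"
    "- int (m + 2*k - 2) = 2 - 2*int k - int m"
    "int (m + 2*k - 2) + 2 - 2 * int (2*k - 1) = 2 - 2*int k + int m"
    "\<And>n. n + (m + 2*k - 2) + 1 = n + m + 2*k - 1"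
    "m + 2*k - 2 + 1 = m + 2*k - 1"
    using assms by simp_all
  show ?thesis
    using hankelD_negative_shift_eq_0[of _ "m + 2*k - 1" "2*k"]
      hankelD_negative_shift_eq_0[of _ "m + 2*k - 2" "2*k - 1"] reflection
    unfolding index_eqs by blast
qed

end
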